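(* The signature of the bilinear form $\eta^+$ on $V_q^+$ is $\operatorname{sg}(\eta^+)=\frac12\sum_{n=1}^{r-1}\epsilon_n$, and $\operatorname{sg}(\eta^+)=\operatorname{sg}_{V_q^+}(\Omega^+)$, the signature of the quadratic form $(x,y)\mapsto\operatorname{tr}_{V_q^+}(\Omega^+xy)$.
   Context: Let $r\ge3$ and $s$ be coprime odd integers with $0<s<r$, $q=\exp(i\pi s/r)$, and $\epsilon_n=(-1)^{\lfloor ns/r\rfloor}$ for $1\le n\le r-1$ (the sign of $[n]=\frac{q^n-q^{-n}}{q-q^{-1}}$; note $\epsilon_n=\epsilon_{r-n}$). $V_q^+$ is the SO$_3$ signed Verlinde algebra: the commutative semisimple $\mathbb{Q}$-algebra with basis $e_0,e_2,\dots,e_{r-3}$ (the even part of the signed Verlinde algebra $V_q$), a Frobenius algebra whose form $\eta^+(x,y)=\epsilon^+(xy)$ is diagonal in this basis with $\eta^+(e_{2n},e_{2n})=\epsilon_{2n+1}$, and $\Omega^+=\sum_n\epsilon_{2n+1}e_{2n}^2$. $\operatorname{tr}_{V}(a)$ denotes the trace of multiplication by $a$. *)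

theory Defs
  imports Complex_Main
begin

(* sign of the quantum integer [n] at q = exp(i pi s / r):  epsilon_n = (-1)^floor(n s / r) *)
definition qsign :: "nat \<Rightarrow> nat \<Rightarrow> nat \<Rightarrow> int" where
  "qsign r s n = (-1) ^ ((n * s) div r)"

definition qform :: "(nat \<Rightarrow> nat \<Rightarrow> real) \<Rightarrow> nat \<Rightarrow> (nat \<Rightarrow> real) \<Rightarrow> real" where
  "qform G m x = (\<Sum>i<m. \<Sum>j<m. G i j * x i * x j)"

definition pos_index :: "(nat \<Rightarrow> nat \<Rightarrow> real) \<Rightarrow> nat \<Rightarrow> nat" where
  "pos_index G m = Max {d. \<exists>v :: nat \<Rightarrow> nat \<Rightarrow> real. \<forall>c :: nat \<Rightarrow> real.
       (\<exists>j<d. c j \<noteq> 0) \<longrightarrow> qform G m (\<lambda>i. \<Sum>j<d. c j * v j i) > 0}"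

definition signature :: "(nat \<Rightarrow> nat \<Rightarrow> real) \<Rightarrow> nat \<Rightarrow> int" where
  "signature G m = int (pos_index G m) - int (pos_index (\<lambda>i j. - G i j) m)"

(* A finite-dimensional Q-algebra with basis indexed by 0..m-1 (basis element number n
   of V_q^+ is e_{2n}), given by structure constants: e_i e_j = sum_k c i j k e_k *)
definition basis_vec :: "nat \<Rightarrow> nat \<Rightarrow> rat" where
  "basis_vec i = (\<lambda>k. if k = i then 1 else 0)"

definition alg_mult :: "(nat \<Rightarrow> nat \<Rightarrow> nat \<Rightarrow> rat) \<Rightarrow> nat \<Rightarrow>
    (nat \<Rightarrow> rat) \<Rightarrow> (nat \<Rightarrow> rat) \<Rightarrow> (nat \<Rightarrow> rat)" where
  "alg_mult c m x y = (\<lambda>k. if k < m then (\<Sum>i<m. \<Sum>j<m. x i * y j * c i j k) else 0)"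

definition alg_tr :: "(nat \<Rightarrow> nat \<Rightarrow> nat \<Rightarrow> rat) \<Rightarrow> nat \<Rightarrow> (nat \<Rightarrow> rat) \<Rightarrow> rat" where
  "alg_tr c m a = (\<Sum>p<m. alg_mult c m a (basis_vec p) p)"

(* the counit epsilon^+ as a linear functional with values f k = epsilon^+(e_{2k}) *)
definition counit :: "(nat \<Rightarrow> rat) \<Rightarrow> nat \<Rightarrow> (nat \<Rightarrow> rat) \<Rightarrow> rat" where
  "counit f m x = (\<Sum>k<m. f k * x k)"

definition Omega_plus :: "nat \<Rightarrow> nat \<Rightarrow> (nat \<Rightarrow> nat \<Rightarrow> nat \<Rightarrow> rat) \<Rightarrow> nat \<Rightarrow> (nat \<Rightarrow> rat)" where
  "Omega_plus r s c m = (\<lambda>k. \<Sum>n<m. of_int (qsign r s (2*n+1)) *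
       alg_mult c m (basis_vec n) (basis_vec n) k)"

end

theory Submission
  imports Defs "Jordan_Normal_Form.Schur_Decomposition"
begin

(* The basis e_{2n} is orthogonal for eta^+ with eta^+(e_{2n}, e_{2n}) = epsilon_{2n+1} = +-1, so
   sg(eta^+) = sum_n epsilon_{2n+1}; since epsilon_n = epsilon_{r-n}, the even-indexed signs repeat
   the odd-indexed ones and this is half of the sum over all n.
   For the second form, the Frobenius identity tr(a) = eta^+(a, Omega^+) gives
   tr(Omega^+ x y) = eta^+(Omega^+ x, Omega^+ y): the trace form is congruent to eta^+ via
   multiplication by Omega^+. That map is injective: if Omega^+ x = 0 then tr(x^n) = 0 for all
   n >= 1, so in characteristic 0 the multiplication by x is nilpotent (triangularise it over the
   complex numbers), and a nilpotent element of a semisimple commutative algebra vanishes. *)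

section \<open>Quadratic forms and Sylvester's signature\<close>

lemma homogeneous_system_nontrivial_solution:
  fixes a :: "nat \<Rightarrow> nat \<Rightarrow> 'a::field"
  assumes "finite K" "finite J" "card K < card J"
  shows "\<exists>x. (\<exists>j\<in>J. x j \<noteq> 0) \<and> (\<forall>k\<in>K. (\<Sum>j\<in>J. a k j * x j) = 0)"
  using assms
proof (induction K arbitrary: a J rule: finite_induct)
  case empty
  then obtain j where "j \<in> J" by fastforce
  then show ?case by (intro exI[of _ "\<lambda>_. 1"]) auto
next
  case (insert k0 K)
  show ?case
  proof (cases "\<forall>j\<in>J. a k0 j = 0")
    case True
    from insert.IH[of J a] insert.prems insert.hyps obtain x where
      x: "\<exists>j\<in>J. x j \<noteq> 0" "\<forall>k\<in>K. (\<Sum>j\<in>J. a k j * x j) = 0" by auto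
    show ?thesis using x True by (intro exI[of _ x]) auto
  next
    case False
    then obtain j0 where j0: "j0 \<in> J" "a k0 j0 \<noteq> 0" by auto
    \<comment> \<open>Gaussian elimination: solve equation k0 for the unknown j0.\<close>
    define J' where "J' = J - {j0}"
    define b where "b k j = a k j - a k j0 * a k0 j / a k0 j0" for k j
    have "card K < card J'" using insert.prems insert.hyps j0 unfolding J'_def by auto
    with insert.IH[of J' b] insert.prems obtain x' where
      x': "\<exists>j\<in>J'. x' j \<noteq> 0" "\<forall>k\<in>K. (\<Sum>j\<in>J'. b k j * x' j) = 0"
      unfolding J'_def by auto
    define S where "S = (\<Sum>j\<in>J'. a k0 j * x' j)"
    define x where "x j = (if j = j0 then - S / a k0 j0 else x' j)" for j
    have split: "(\<Sum>j\<in>J. a k j * x j) = a k j0 * x j0 + (\<Sum>j\<in>J'. a k j * x' j)" for k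
    proof -
      have "(\<Sum>j\<in>J. a k j * x j) = a k j0 * x j0 + (\<Sum>j\<in>J'. a k j * x j)"
        unfolding J'_def using j0 insert.prems by (simp add: sum.remove)
      also have "(\<Sum>j\<in>J'. a k j * x j) = (\<Sum>j\<in>J'. a k j * x' j)"
        by (rule sum.cong) (auto simp: x_def J'_def)
      finally show ?thesis .
    qed
    have "\<exists>j\<in>J. x j \<noteq> 0" using x' by (auto simp: x_def J'_def)
    moreover have "(\<Sum>j\<in>J. a k0 j * x j) = 0"
      unfolding split using j0 by (simp add: x_def S_def)
    moreover have "(\<Sum>j\<in>J. a k j * x j) = 0" if k: "k \<in> K" for k
    proof -
      have "0 = (\<Sum>j\<in>J'. b k j * x' j)" using x' k by auto
      also have "\<dots> = (\<Sum>j\<in>J'. a k j * x' j) - a k j0 / a k0 j0 * S"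
        unfolding b_def S_def
        by (simp add: algebra_simps sum_subtractf sum_distrib_left sum_divide_distrib)
      finally show ?thesis unfolding split using j0 by (simp add: x_def)
    qed
    ultimately show ?thesis by auto
  qed
qed

lemma injective_square_matrix_right_inverse:
  fixes M :: "nat \<Rightarrow> nat \<Rightarrow> 'a::field"
  assumes inj: "\<And>x. \<forall>k<m. (\<Sum>l<m. M k l * x l) = 0 \<Longrightarrow> \<forall>l<m. x l = 0"
  shows "\<exists>N. \<forall>k<m. \<forall>j<m. (\<Sum>l<m. M k l * N l j) = (if k = j then 1 else 0)"
proof -
  have "\<exists>y. \<forall>k<m. (\<Sum>l<m. M k l * y l) = (if k = j then 1 else 0)" for j
  proof -
    define a where "a k l = (if l < m then M k l else if k = j then 1 else 0)" for k l
    obtain z where z: "\<exists>l\<in>{..<Suc m}. z l \<noteq> 0" "\<forall>k\<in>{..<m}. (\<Sum>l<Suc m. a k l * z l) = 0"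
      using homogeneous_system_nontrivial_solution[of "{..<m}" "{..<Suc m}" a] by auto
    have eq: "(\<Sum>l<m. M k l * z l) = - (if k = j then z m else 0)" if "k < m" for k
    proof -
      have "(\<Sum>l<Suc m. a k l * z l) = 0" using z(2) that by simp
      then show ?thesis by (cases "k = j") (simp_all add: a_def eq_neg_iff_add_eq_0)
    qed
    have zm: "z m \<noteq> 0"
    proof
      assume "z m = 0"
      then have "\<forall>k<m. (\<Sum>l<m. M k l * z l) = 0" by (simp add: eq)
      then have "\<forall>l<m. z l = 0" by (rule inj)
      with z(1) \<open>z m = 0\<close> show False by (auto simp: less_Suc_eq)
    qed
    have "(\<Sum>l<m. M k l * (- z l / z m)) = (if k = j then 1 else 0)" if "k < m" for k
    proof -
      have "(\<Sum>l<m. M k l * (- z l / z m)) = - (\<Sum>l<m. M k l * z l) / z m"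
        by (simp add: sum_divide_distrib sum_negf)
      then show ?thesis using eq[OF that] zm by simp
    qed
    then show ?thesis by (intro exI[of _ "\<lambda>l. - z l / z m"]) blast
  qed
  then have "\<exists>N. \<forall>j. \<forall>k<m. (\<Sum>l<m. M k l * N j l) = (if k = j then 1 else 0)"
    by (intro choice allI)
  then obtain N where "\<And>j. \<forall>k<m. (\<Sum>l<m. M k l * N j l) = (if k = j then 1 else 0)"
    by blast
  then show ?thesis by (intro exI[of _ "\<lambda>l j. N j l"]) auto
qed

lemma sum_swap4:
  "(\<Sum>i\<in>A. \<Sum>j\<in>B. \<Sum>k\<in>C. \<Sum>l\<in>D. F i j k l) = (\<Sum>k\<in>C. \<Sum>l\<in>D. \<Sum>i\<in>A. \<Sum>j\<in>B. F i j k l)"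
proof -
  have "(\<Sum>i\<in>A. \<Sum>j\<in>B. \<Sum>k\<in>C. \<Sum>l\<in>D. F i j k l) = (\<Sum>i\<in>A. \<Sum>k\<in>C. \<Sum>j\<in>B. \<Sum>l\<in>D. F i j k l)"
    by (intro sum.cong refl) (rule sum.swap)
  also have "\<dots> = (\<Sum>k\<in>C. \<Sum>i\<in>A. \<Sum>j\<in>B. \<Sum>l\<in>D. F i j k l)" by (rule sum.swap)
  also have "\<dots> = (\<Sum>k\<in>C. \<Sum>i\<in>A. \<Sum>l\<in>D. \<Sum>j\<in>B. F i j k l)"
    by (intro sum.cong refl) (rule sum.swap)
  also have "\<dots> = (\<Sum>k\<in>C. \<Sum>l\<in>D. \<Sum>i\<in>A. \<Sum>j\<in>B. F i j k l)"
    by (intro sum.cong refl) (rule sum.swap)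
  finally show ?thesis .
qed

definition positive_dims :: "(nat \<Rightarrow> nat \<Rightarrow> real) \<Rightarrow> nat \<Rightarrow> nat set" where
  "positive_dims G m = {d. \<exists>v :: nat \<Rightarrow> nat \<Rightarrow> real. \<forall>c :: nat \<Rightarrow> real.
       (\<exists>j<d. c j \<noteq> 0) \<longrightarrow> qform G m (\<lambda>i. \<Sum>j<d. c j * v j i) > 0}"

lemma pos_index_eq_Max: "pos_index G m = Max (positive_dims G m)"
  unfolding pos_index_def positive_dims_def ..

lemma qform_cong: "(\<And>i. i < m \<Longrightarrow> x i = y i) \<Longrightarrow> qform G m x = qform G m y"
  unfolding qform_def by (intro sum.cong refl) auto

lemma positive_dims_le:
  assumes "d \<in> positive_dims G m"
  shows "d \<le> m"
proof (rule ccontr)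
  assume "\<not> d \<le> m"
  from assms obtain v where
    v: "\<And>c. \<exists>j<d. c j \<noteq> 0 \<Longrightarrow> qform G m (\<lambda>i. \<Sum>j<d. c j * v j i) > 0"
    unfolding positive_dims_def by auto
  from homogeneous_system_nontrivial_solution[of "{..<m}" "{..<d}" "\<lambda>k j. v j k"] \<open>\<not> d \<le> m\<close>
  obtain c where c: "\<exists>j\<in>{..<d}. c j \<noteq> 0" "\<forall>k\<in>{..<m}. (\<Sum>j<d. v j k * c j) = 0"
    by auto
  have "qform G m (\<lambda>i. \<Sum>j<d. c j * v j i) = qform G m (\<lambda>i. 0)"
    using c(2) by (intro qform_cong) (auto simp: mult.commute)
  also have "\<dots> = 0" by (simp add: qform_def)
  finally show False using v[of c] c(1) by auto
qed

lemma finite_positive_dims: "finite (positive_dims G m)"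
  by (rule finite_subset[of _ "{..m}"]) (auto dest: positive_dims_le)

lemma pos_index_in_positive_dims: "pos_index G m \<in> positive_dims G m"
proof -
  have "0 \<in> positive_dims G m" unfolding positive_dims_def by auto
  then show ?thesis
    unfolding pos_index_eq_Max by (intro Max_in finite_positive_dims) auto
qed

lemma le_pos_index: "d \<in> positive_dims G m \<Longrightarrow> d \<le> pos_index G m"
  unfolding pos_index_eq_Max by (intro Max_ge finite_positive_dims)

lemma pos_index_le_pullback:
  assumes "\<And>x. qform G m x = qform H m (\<lambda>i. \<Sum>l<m. T i l * x l)"
  shows "pos_index G m \<le> pos_index H m"
proof (rule le_pos_index)
  let ?d = "pos_index G m"
  from pos_index_in_positive_dims[of G m] obtain v where
    v: "\<And>c. \<exists>j<?d. c j \<noteq> 0 \<Longrightarrow> qform G m (\<lambda>i. \<Sum>j<?d. c j * v j i) > 0"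
    unfolding positive_dims_def by auto
  define w where "w j i = (\<Sum>l<m. T i l * v j l)" for j i
  show "?d \<in> positive_dims H m" unfolding positive_dims_def
  proof (intro CollectI exI[of _ w] allI impI)
    fix c :: "nat \<Rightarrow> real"
    assume c: "\<exists>j<?d. c j \<noteq> 0"
    have "(\<Sum>j<?d. c j * w j i) = (\<Sum>l<m. T i l * (\<Sum>j<?d. c j * v j l))" for i
    proof -
      have "(\<Sum>j<?d. c j * w j i) = (\<Sum>j<?d. \<Sum>l<m. T i l * (c j * v j l))"
        unfolding w_def by (simp add: sum_distrib_left ac_simps)
      also have "\<dots> = (\<Sum>l<m. \<Sum>j<?d. T i l * (c j * v j l))" by (rule sum.swap)
      finally show ?thesis by (simp add: sum_distrib_left)
    qed
    then show "qform H m (\<lambda>i. \<Sum>j<?d. c j * w j i) > 0"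
      using v[OF c] assms by simp
  qed
qed

lemma qform_congruent:
  assumes "\<And>i j. i < m \<Longrightarrow> j < m \<Longrightarrow> H i j = (\<Sum>k<m. \<Sum>l<m. M k i * G k l * M l j)"
  shows "qform H m x = qform G m (\<lambda>k. \<Sum>i<m. M k i * x i)"
proof -
  have "qform H m x = (\<Sum>i<m. \<Sum>j<m. \<Sum>k<m. \<Sum>l<m. G k l * (M k i * x i) * (M l j * x j))"
    unfolding qform_def using assms
    by (intro sum.cong refl) (simp add: sum_distrib_left sum_distrib_right ac_simps)
  also have "\<dots> = (\<Sum>k<m. \<Sum>l<m. \<Sum>i<m. \<Sum>j<m. G k l * (M k i * x i) * (M l j * x j))"
    by (rule sum_swap4)
  also have "\<dots> = qform G m (\<lambda>k. \<Sum>i<m. M k i * x i)"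
    unfolding qform_def by (intro sum.cong refl, subst sum.swap) (simp only: sum_distrib_left sum_distrib_right mult.assoc)
  finally show ?thesis .
qed

lemma signature_congruent:
  assumes H: "\<And>i j. i < m \<Longrightarrow> j < m \<Longrightarrow> H i j = (\<Sum>k<m. \<Sum>l<m. M k i * G k l * M l j)"
    and inv: "\<And>k j. k < m \<Longrightarrow> j < m \<Longrightarrow> (\<Sum>l<m. M k l * N l j) = (if k = j then 1 else 0)"
  shows "signature H m = signature G m"
proof -
  have MN: "(\<Sum>i<m. M k i * (\<Sum>l<m. N i l * y l)) = y k" if "k < m" for k y
  proof -
    have "(\<Sum>i<m. M k i * (\<Sum>l<m. N i l * y l)) = (\<Sum>i<m. \<Sum>l<m. M k i * N i l * y l)"
      by (simp add: sum_distrib_left ac_simps)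
    also have "\<dots> = (\<Sum>l<m. \<Sum>i<m. M k i * N i l * y l)" by (rule sum.swap)
    also have "\<dots> = (\<Sum>l<m. (\<Sum>i<m. M k i * N i l) * y l)" by (simp add: sum_distrib_right)
    also have "\<dots> = (\<Sum>l<m. if l = k then y l else 0)" using that by (intro sum.cong) (auto simp: inv)
    also have "\<dots> = y k" using that by simp
    finally show ?thesis .
  qed
  have pos_index_eq: "pos_index H' m = pos_index G' m"
    if congr: "\<And>i j. i < m \<Longrightarrow> j < m \<Longrightarrow> H' i j = (\<Sum>k<m. \<Sum>l<m. M k i * G' k l * M l j)"
    for H' G'
  proof (rule antisym)
    show "pos_index H' m \<le> pos_index G' m"
      by (rule pos_index_le_pullback) (rule qform_congruent[OF congr])
    show "pos_index G' m \<le> pos_index H' m"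
      by (rule pos_index_le_pullback[where T = N]) (simp add: qform_congruent[OF congr] MN cong: qform_cong)
  qed
  have "- H i j = (\<Sum>k<m. \<Sum>l<m. M k i * - G k l * M l j)" if "i < m" "j < m" for i j
    using H[OF that] by (simp add: sum_negf)
  then have "pos_index (\<lambda>i j. - H i j) m = pos_index (\<lambda>i j. - G i j) m" by (rule pos_index_eq)
  then show ?thesis unfolding signature_def using pos_index_eq[OF H] by simp
qed

lemma qform_diag:
  assumes "\<And>i j. i < m \<Longrightarrow> j < m \<Longrightarrow> G i j = (if i = j then g i else 0)"
  shows "qform G m x = (\<Sum>i<m. g i * (x i)\<^sup>2)"
  unfolding qform_def
proof (rule sum.cong[OF refl])
  fix i
  assume "i \<in> {..<m}"
  then have "(\<Sum>j<m. G i j * x i * x j) = (\<Sum>j<m. if j = i then g i * x i * x i else 0)"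
    using assms by (intro sum.cong refl) auto
  also have "\<dots> = g i * (x i)\<^sup>2" using \<open>i \<in> {..<m}\<close> by (simp add: power2_eq_square)
  finally show "(\<Sum>j<m. G i j * x i * x j) = g i * (x i)\<^sup>2" .
qed

lemma pos_index_diag_le:
  assumes diag: "\<And>i j. i < m \<Longrightarrow> j < m \<Longrightarrow> G i j = (if i = j then g i else 0)"
  shows "pos_index G m \<le> card {i. i < m \<and> g i > 0}"
proof (rule ccontr)
  define P where "P = {i. i < m \<and> g i > 0}"
  let ?d = "pos_index G m"
  assume "\<not> ?d \<le> card {i. i < m \<and> g i > 0}"
  then have lt: "card P < card {..<?d}" unfolding P_def by simp
  from pos_index_in_positive_dims[of G m] obtain v where
    v: "\<And>c. \<exists>j<?d. c j \<noteq> 0 \<Longrightarrow> qform G m (\<lambda>i. \<Sum>j<?d. c j * v j i) > 0"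
    unfolding positive_dims_def by auto
  \<comment> \<open>a nonzero vector of the positive subspace lying in the span of the nonpositive e_i\<close>
  from homogeneous_system_nontrivial_solution[OF _ _ lt, of "\<lambda>k j. v j k"]
  obtain c where c: "\<exists>j\<in>{..<?d}. c j \<noteq> 0" "\<forall>k\<in>P. (\<Sum>j<?d. v j k * c j) = 0"
    unfolding P_def by auto
  let ?x = "\<lambda>i. \<Sum>j<?d. c j * v j i"
  have "qform G m ?x = (\<Sum>i<m. g i * (?x i)\<^sup>2)" by (rule qform_diag[OF diag])
  also have "\<dots> \<le> 0"
  proof (rule sum_nonpos)
    fix i
    assume i: "i \<in> {..<m}"
    show "g i * (?x i)\<^sup>2 \<le> 0"
    proof (cases "i \<in> P")
      case True
      then have "?x i = 0" using c(2) by (auto simp: mult.commute)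
      then show ?thesis by simp
    next
      case False
      then have "g i \<le> 0" using i unfolding P_def by auto
      then show ?thesis by (simp add: mult_nonpos_nonneg)
    qed
  qed
  finally show False using v[of c] c(1) by auto
qed

lemma card_pos_le_pos_index_diag:
  assumes diag: "\<And>i j. i < m \<Longrightarrow> j < m \<Longrightarrow> G i j = (if i = j then g i else 0)"
  shows "card {i. i < m \<and> g i > 0} \<le> pos_index G m"
proof (rule le_pos_index)
  define P where "P = {i. i < m \<and> g i > 0}"
  obtain h where h: "bij_betw h {0..<card P} P"
    using ex_bij_betw_nat_finite[of P] unfolding P_def by auto
  define v where "v j i = (if h j = i then 1 else 0 :: real)" for j i
  show "card {i. i < m \<and> g i > 0} \<in> positive_dims G m"
    unfolding positive_dims_def P_def[symmetric]
  proof (intro CollectI exI[of _ v] allI impI)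
    fix c :: "nat \<Rightarrow> real"
    assume "\<exists>j<card P. c j \<noteq> 0"
    then obtain j0 where j0: "j0 < card P" "c j0 \<noteq> 0" by auto
    let ?x = "\<lambda>i. \<Sum>j<card P. c j * v j i"
    have x_out: "?x i = 0" if "i \<notin> P" for i
      using h that unfolding v_def bij_betw_def by (auto intro!: sum.neutral)
    have x_in: "?x (h j) = c j" if "j < card P" for j
    proof -
      have "?x (h j) = (\<Sum>j'<card P. if j' = j then c j' else 0)"
        using h that unfolding v_def bij_betw_def inj_on_def by (intro sum.cong refl) auto
      then show ?thesis using that by simp
    qed
    have gpos: "g (h j) > 0" if "j < card P" for j
      using h that unfolding bij_betw_def P_def by auto
    have "qform G m ?x = (\<Sum>i<m. g i * (?x i)\<^sup>2)" by (rule qform_diag[OF diag])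
    also have "\<dots> = (\<Sum>i\<in>P. g i * (?x i)\<^sup>2)"
      using x_out by (intro sum.mono_neutral_right) (auto simp: P_def)
    also have "\<dots> = (\<Sum>j\<in>{0..<card P}. g (h j) * (c j)\<^sup>2)"
      using x_in by (subst sum.reindex_bij_betw[OF h, symmetric]) (auto intro!: sum.cong)
    also have "\<dots> \<ge> g (h j0) * (c j0)\<^sup>2"
    proof (rule member_le_sum)
      show "0 \<le> g (h j) * (c j)\<^sup>2" if "j \<in> {0..<card P} - {j0}" for j
        using gpos[of j] that by simp
    qed (use j0 in auto)
    finally show "qform G m ?x > 0"
      using gpos[OF j0(1)] j0(2) by (smt (verit) zero_less_mult_iff zero_less_power2)
  qed
qed

lemma signature_diag:
  assumes diag: "\<And>i j. i < m \<Longrightarrow> j < m \<Longrightarrow> G i j = (if i = j then g i else 0)"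
  shows "real_of_int (signature G m) = (\<Sum>i<m. sgn (g i))"
proof -
  have pos: "pos_index G m = card {i. i < m \<and> g i > 0}" if
    "\<And>i j. i < m \<Longrightarrow> j < m \<Longrightarrow> G i j = (if i = j then g i else 0)" for G g
    using pos_index_diag_le[OF that] card_pos_le_pos_index_diag[OF that] by (rule antisym)
  have neg: "pos_index (\<lambda>i j. - G i j) m = card {i. i < m \<and> g i < 0}"
    using pos[of "\<lambda>i j. - G i j" "\<lambda>i. - g i"] diag by simp
  have "real_of_int (signature G m)
      = real (card {i. i < m \<and> g i > 0}) - real (card {i. i < m \<and> g i < 0})"
    using pos[OF diag] neg unfolding signature_def by simp
  also have "\<dots> = (\<Sum>i<m. (if g i > 0 then 1 else 0) - (if g i < 0 then 1 else 0))"
    by (simp add: sum_subtractf sum.If_cases Int_def conj_commute lessThan_def)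
  also have "\<dots> = (\<Sum>i<m. sgn (g i))"
    by (intro sum.cong refl) (simp add: sgn_real_def)
  finally show ?thesis .
qed

section \<open>Matrices whose powers are traceless\<close>

definition mat_trace :: "'a::comm_ring_1 mat \<Rightarrow> 'a" where
  "mat_trace A = (\<Sum>i<dim_row A. A $$ (i, i))"

lemma mat_trace_mult_comm:
  assumes A: "A \<in> carrier_mat n n" and B: "B \<in> carrier_mat n n"
  shows "mat_trace (A * B) = mat_trace (B * A)"
proof -
  have "mat_trace (A * B) = (\<Sum>i<n. \<Sum>l<n. A $$ (i, l) * B $$ (l, i))"
    using A B unfolding mat_trace_def
    by (intro sum.cong refl) (auto simp: scalar_prod_def lessThan_atLeast0)
  also have "\<dots> = (\<Sum>l<n. \<Sum>i<n. B $$ (l, i) * A $$ (i, l))"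
    by (subst sum.swap) (simp add: ac_simps)
  also have "\<dots> = mat_trace (B * A)"
    using A B unfolding mat_trace_def
    by (intro sum.cong refl) (auto simp: scalar_prod_def lessThan_atLeast0)
  finally show ?thesis .
qed

lemma mat_trace_similar:
  assumes "similar_mat_wit A B P Q" "A \<in> carrier_mat n n"
  shows "mat_trace A = mat_trace B"
proof -
  from similar_mat_witD2[OF assms(2,1)] have
    C: "B \<in> carrier_mat n n" "P \<in> carrier_mat n n" "Q \<in> carrier_mat n n"
    and PQ: "Q * P = 1\<^sub>m n" and AB: "A = P * B * Q" by auto
  have "mat_trace A = mat_trace ((P * B) * Q)" using AB by simp
  also have "\<dots> = mat_trace (Q * (P * B))" using C by (intro mat_trace_mult_comm) auto
  also have "Q * (P * B) = (Q * P) * B" using C by (simp add: assoc_mult_mat)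
  finally show ?thesis using C PQ by simp
qed

lemma upper_triangular_pow_below_diag:
  assumes B: "B \<in> carrier_mat n n" and ut: "upper_triangular B"
  shows "i < n \<Longrightarrow> j < i \<Longrightarrow> (B ^\<^sub>m k) $$ (i, j) = 0"
proof (induction k arbitrary: i j)
  case 0
  then show ?case using B by simp
next
  case (Suc k)
  have "(B ^\<^sub>m Suc k) $$ (i, j) = (\<Sum>l<n. (B ^\<^sub>m k) $$ (i, l) * B $$ (l, j))"
    using B Suc.prems by (auto simp: scalar_prod_def lessThan_atLeast0)
  also have "\<dots> = 0"
  proof (rule sum.neutral, intro ballI)
    fix l
    assume l: "l \<in> {..<n}"
    show "(B ^\<^sub>m k) $$ (i, l) * B $$ (l, j) = 0"
    proof (cases "l < i")
      case True
      then show ?thesis using Suc by simp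
    next
      case False
      then have "B $$ (l, j) = 0" using Suc.prems ut B l unfolding upper_triangular_def by auto
      then show ?thesis by simp
    qed
  qed
  finally show ?case .
qed

lemma upper_triangular_pow_diag:
  assumes B: "B \<in> carrier_mat n n" and ut: "upper_triangular B" and i: "i < n"
  shows "(B ^\<^sub>m k) $$ (i, i) = (B $$ (i, i)) ^ k"
proof (induction k)
  case 0
  then show ?case using B i by simp
next
  case (Suc k)
  have "(B ^\<^sub>m Suc k) $$ (i, i) = (\<Sum>l<n. (B ^\<^sub>m k) $$ (i, l) * B $$ (l, i))"
    using B i by (auto simp: scalar_prod_def lessThan_atLeast0)
  also have "\<dots> = (\<Sum>l<n. if l = i then (B ^\<^sub>m k) $$ (i, i) * B $$ (i, i) else 0)"
  proof (intro sum.cong refl)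
    fix l
    assume l: "l \<in> {..<n}"
    show "(B ^\<^sub>m k) $$ (i, l) * B $$ (l, i) = (if l = i then (B ^\<^sub>m k) $$ (i, i) * B $$ (i, i) else 0)"
    proof (cases "l < i")
      case True
      then show ?thesis using upper_triangular_pow_below_diag[OF B ut i True] by simp
    next
      case False
      then show ?thesis using ut B l unfolding upper_triangular_def by auto
    qed
  qed
  also have "\<dots> = (B $$ (i, i)) ^ Suc k" using i Suc by (simp add: power_commutes)
  finally show ?case .
qed

lemma strictly_upper_triangular_pow:
  assumes B: "B \<in> carrier_mat n n" and ut: "upper_triangular B"
    and diag: "\<And>i. i < n \<Longrightarrow> B $$ (i, i) = 0"
  shows "i < n \<Longrightarrow> j < n \<Longrightarrow> j < i + k \<Longrightarrow> (B ^\<^sub>m k) $$ (i, j) = 0"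
proof (induction k arbitrary: i j)
  case 0
  then show ?case using B by simp
next
  case (Suc k)
  have "(B ^\<^sub>m Suc k) $$ (i, j) = (\<Sum>l<n. (B ^\<^sub>m k) $$ (i, l) * B $$ (l, j))"
    using B Suc.prems by (auto simp: scalar_prod_def lessThan_atLeast0)
  also have "\<dots> = 0"
  proof (rule sum.neutral, intro ballI)
    fix l
    assume l: "l \<in> {..<n}"
    show "(B ^\<^sub>m k) $$ (i, l) * B $$ (l, j) = 0"
    proof (cases "l < i + k")
      case True
      then show ?thesis using Suc l by simp
    next
      case False
      then have "B $$ (l, j) = 0"
        using Suc.prems ut B l diag unfolding upper_triangular_def by (cases "j = l") auto
      then show ?thesis by simp
    qed
  qed
  finally show ?case .
qed

lemma power_sums_zero_imp_zero:
  fixes e :: "'b \<Rightarrow> 'a::field_char_0"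
  assumes fin: "finite I" and sums: "\<And>k. (\<Sum>i\<in>I. e i ^ Suc k) = 0"
  shows "\<forall>i\<in>I. e i = 0"
proof (rule ccontr)
  assume "\<not> ?thesis"
  then obtain i0 where i0: "i0 \<in> I" "e i0 \<noteq> 0" by auto
  define a where "a = e i0"
  define V where "V = e ` I - {a}"
  \<comment> \<open>q has no constant term and, among the values of e, vanishes at all but a.\<close>
  define q where "q = [:0, 1:] * (\<Prod>v\<in>V. [:- v, 1:])"
  have finV: "finite V" using fin unfolding V_def by auto
  have q_eval: "poly q y = y * (\<Prod>v\<in>V. y - v)" for y
    unfolding q_def by (simp add: poly_prod)
  have qa: "poly q a \<noteq> 0" unfolding q_eval using finV i0 by (auto simp: a_def V_def)
  have q_other: "poly q (e i) = (if e i = a then poly q a else 0)" if "i \<in> I" for i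
  proof (cases "e i = a")
    case False
    then have "e i \<in> V" using that unfolding V_def by auto
    then show ?thesis unfolding q_eval using finV False by (auto simp: prod_zero_iff)
  qed simp
  have "(\<Sum>i\<in>I. poly q (e i)) = of_nat (card {i\<in>I. e i = a}) * poly q a"
    using fin q_other by (simp add: sum.If_cases Int_def cong: sum.cong)
  moreover have "card {i\<in>I. e i = a} \<noteq> 0" using fin i0 by (auto simp: a_def)
  ultimately have "(\<Sum>i\<in>I. poly q (e i)) \<noteq> 0" using qa by simp
  moreover have "(\<Sum>i\<in>I. poly q (e i)) = (\<Sum>k\<le>degree q. coeff q k * (\<Sum>i\<in>I. e i ^ k))"
    by (simp add: poly_altdef sum_distrib_left) (rule sum.swap)
  moreover have "coeff q k * (\<Sum>i\<in>I. e i ^ k) = 0" for k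
  proof (cases k)
    case 0
    have "coeff q 0 = 0" using q_eval[of 0] by (simp add: poly_0_coeff_0)
    then show ?thesis using 0 by simp
  next
    case (Suc k')
    then show ?thesis using sums by simp
  qed
  ultimately show False by simp
qed

lemma nilpotent_if_traces_of_powers_zero:
  fixes A :: "complex mat"
  assumes A: "A \<in> carrier_mat n n" and tr: "\<And>k. mat_trace (A ^\<^sub>m Suc k) = 0"
  shows "A ^\<^sub>m n = 0\<^sub>m n n"
proof -
  obtain es where es: "char_poly A = (\<Prod>a\<leftarrow>es. [:- a, 1:])"
    using char_poly_factorized[OF A] by blast
  define B where "B = schur_upper_triangular A es"
  have B: "B \<in> carrier_mat n n" and ut: "upper_triangular B" and "similar_mat A B"
    using schur_upper_triangular[OF A es] unfolding B_def by auto
  then obtain P Q where wit: "\<And>k. similar_mat_wit (A ^\<^sub>m k) (B ^\<^sub>m k) P Q"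
    unfolding similar_mat_def using similar_mat_wit_pow by blast
  have "(\<Sum>i<n. (B $$ (i, i)) ^ Suc k) = 0" for k
  proof -
    have "(\<Sum>i<n. (B $$ (i, i)) ^ Suc k) = mat_trace (B ^\<^sub>m Suc k)"
      using B unfolding mat_trace_def
      by (simp add: upper_triangular_pow_diag[OF B ut] del: pow_mat.simps)
    also have "\<dots> = mat_trace (A ^\<^sub>m Suc k)"
      using mat_trace_similar[OF wit, of "Suc k" n] A by (simp del: pow_mat.simps)
    finally show ?thesis by (simp only: tr)
  qed
  then have "\<forall>i\<in>{..<n}. B $$ (i, i) = 0"
    by (rule power_sums_zero_imp_zero[OF finite_lessThan])
  then have diag: "B $$ (i, i) = 0" if "i < n" for i
    using that by simp
  have "B ^\<^sub>m n = 0\<^sub>m n n"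
    using strictly_upper_triangular_pow[OF B ut diag] B
    by (intro eq_matI) (simp_all del: pow_mat.simps)
  moreover have "P \<in> carrier_mat n n" "Q \<in> carrier_mat n n" "A ^\<^sub>m n = P * B ^\<^sub>m n * Q"
    using similar_mat_witD2[OF pow_carrier_mat[OF A] wit[of n]] by auto
  ultimately show ?thesis by (simp del: pow_mat.simps)
qed

section \<open>Commutative algebras given by structure constants\<close>

locale comm_alg =
  fixes c :: "nat \<Rightarrow> nat \<Rightarrow> nat \<Rightarrow> rat" and m :: nat
  assumes structure_comm: "\<And>i j k. i < m \<Longrightarrow> j < m \<Longrightarrow> k < m \<Longrightarrow> c i j k = c j i k"
    and structure_assoc: "\<And>i j k p. i < m \<Longrightarrow> j < m \<Longrightarrow> k < m \<Longrightarrow> p < m \<Longrightarrow>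
        (\<Sum>l<m. c i j l * c l k p) = (\<Sum>l<m. c j k l * c i l p)"
begin

abbreviation mul :: "(nat \<Rightarrow> rat) \<Rightarrow> (nat \<Rightarrow> rat) \<Rightarrow> nat \<Rightarrow> rat" where
  "mul \<equiv> alg_mult c m"

lemma mul_out: "\<not> k < m \<Longrightarrow> mul x y k = 0"
  by (simp add: alg_mult_def)

lemma mul_in: "k < m \<Longrightarrow> mul x y k = (\<Sum>i<m. \<Sum>j<m. x i * y j * c i j k)"
  by (simp add: alg_mult_def)

lemma mul_eq_zero_if_left: "(\<And>k. k < m \<Longrightarrow> x k = 0) \<Longrightarrow> mul x y = (\<lambda>_. 0)"
  by (simp add: alg_mult_def fun_eq_iff)

lemma mul_comm: "mul x y = mul y x"
proof (rule ext)
  fix k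
  show "mul x y k = mul y x k"
  proof (cases "k < m")
    case True
    have "mul x y k = (\<Sum>i<m. \<Sum>j<m. y j * x i * c j i k)"
      unfolding mul_in[OF True] using True by (intro sum.cong refl) (simp add: structure_comm)
    also have "\<dots> = mul y x k" unfolding mul_in[OF True] by (rule sum.swap)
    finally show ?thesis .
  qed (simp add: mul_out)
qed

lemma mul_assoc: "mul (mul x y) z = mul x (mul y z)"
proof (rule ext)
  fix k
  show "mul (mul x y) z k = mul x (mul y z) k"
  proof (cases "k < m")
    case True
    have "mul (mul x y) z k = (\<Sum>l<m. \<Sum>p<m. \<Sum>i<m. \<Sum>j<m. x i * y j * z p * (c i j l * c l p k))"
      unfolding mul_in[OF True]
      by (intro sum.cong refl) (simp add: mul_in sum_distrib_right sum_distrib_left ac_simps)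
    also have "\<dots> = (\<Sum>i<m. \<Sum>j<m. \<Sum>l<m. \<Sum>p<m. x i * y j * z p * (c i j l * c l p k))"
      by (rule sum_swap4)
    also have "\<dots> = (\<Sum>i<m. \<Sum>j<m. \<Sum>p<m. x i * y j * z p * (\<Sum>l<m. c i j l * c l p k))"
      by (rule sum.cong[OF refl], rule sum.cong[OF refl], subst sum.swap) (simp add: sum_distrib_left)
    also have "\<dots> = (\<Sum>i<m. \<Sum>j<m. \<Sum>p<m. x i * y j * z p * (\<Sum>l<m. c j p l * c i l k))"
      using True by (intro sum.cong refl) (simp add: structure_assoc)
    also have "\<dots> = (\<Sum>i<m. \<Sum>l<m. \<Sum>j<m. \<Sum>p<m. x i * y j * z p * (c j p l * c i l k))"
      by (rule sum.cong[OF refl], subst sum.swap, rule sum.cong[OF refl], subst sum.swap)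
        (simp add: sum_distrib_left)
    also have "\<dots> = mul x (mul y z) k"
      unfolding mul_in[OF True]
      by (intro sum.cong refl) (simp add: mul_in sum_distrib_right sum_distrib_left ac_simps)
    finally show ?thesis .
  qed (simp add: mul_out)
qed

lemma mul_eq_zero_if_right: "(\<And>k. k < m \<Longrightarrow> y k = 0) \<Longrightarrow> mul x y = (\<lambda>_. 0)"
  by (simp add: mul_comm[of x] mul_eq_zero_if_left)

lemma mul_basis_right: "p < m \<Longrightarrow> k < m \<Longrightarrow> mul x (basis_vec p) k = (\<Sum>i<m. x i * c i p k)"
  by (simp add: mul_in basis_vec_def if_distrib if_distribR cong: if_cong)

lemma mul_basis:
  assumes "i < m" "j < m" "k < m"
  shows "mul (basis_vec i) (basis_vec j) k = c i j k"
  using mul_basis_right[OF assms(2,3), of "basis_vec i"] assms(1)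
  by (simp add: basis_vec_def if_distrib if_distribR cong: if_cong)

lemma mul_expand_right:
  assumes "k < m"
  shows "mul x y k = (\<Sum>l<m. mul x (basis_vec l) k * y l)"
proof -
  have "mul x y k = (\<Sum>l<m. \<Sum>i<m. x i * y l * c i l k)"
    using assms by (simp add: mul_in) (rule sum.swap)
  also have "\<dots> = (\<Sum>l<m. mul x (basis_vec l) k * y l)"
    using assms by (intro sum.cong refl) (simp add: mul_basis_right sum_distrib_left ac_simps)
  finally show ?thesis .
qed

text \<open>The algebra need not have a unit, so powers are indexed from the first one:
  alg_pow x n is x to the power n + 1.\<close>

primrec alg_pow :: "(nat \<Rightarrow> rat) \<Rightarrow> nat \<Rightarrow> nat \<Rightarrow> rat" where
  "alg_pow x 0 = x"
| "alg_pow x (Suc n) = mul (alg_pow x n) x"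

lemma alg_pow_add: "mul (alg_pow x a) (alg_pow x b) = alg_pow x (a + b + 1)"
  by (induction b) (simp_all add: mul_assoc[symmetric])

definition mult_matrix :: "(nat \<Rightarrow> rat) \<Rightarrow> complex mat" where
  "mult_matrix x = mat m m (\<lambda>(i, j). of_rat (mul x (basis_vec j) i))"

lemma mult_matrix_carrier: "mult_matrix x \<in> carrier_mat m m"
  by (simp add: mult_matrix_def)

lemma mult_matrix_mult: "mult_matrix x * mult_matrix y = mult_matrix (mul x y)"
proof (rule eq_matI)
  fix i j
  assume "i < dim_row (mult_matrix (mul x y))" "j < dim_col (mult_matrix (mul x y))"
  then have i: "i < m" and j: "j < m" by (simp_all add: mult_matrix_def)
  have "(mult_matrix x * mult_matrix y) $$ (i, j)
      = of_rat (\<Sum>l<m. mul x (basis_vec l) i * mul y (basis_vec j) l)"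
    using i j by (simp add: mult_matrix_def scalar_prod_def lessThan_atLeast0 of_rat_sum of_rat_mult)
  also have "\<dots> = of_rat (mul (mul x y) (basis_vec j) i)"
    using mul_expand_right[OF i, of x "mul y (basis_vec j)"] by (simp add: mul_assoc)
  finally show "(mult_matrix x * mult_matrix y) $$ (i, j) = mult_matrix (mul x y) $$ (i, j)"
    using i j by (simp add: mult_matrix_def)
qed (simp_all add: mult_matrix_def)

lemma mult_matrix_pow: "mult_matrix x ^\<^sub>m Suc n = mult_matrix (alg_pow x n)"
  by (induction n) (simp_all add: mult_matrix_mult mult_matrix_carrier)

lemma mat_trace_mult_matrix: "mat_trace (mult_matrix x) = of_rat (alg_tr c m x)"
  by (simp add: mat_trace_def mult_matrix_def alg_tr_def of_rat_sum)

end

locale reduced_comm_alg = comm_alg +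
  assumes reduced: "\<And>x. \<forall>k<m. mul x x k = 0 \<Longrightarrow> \<forall>k<m. x k = 0"
begin

lemma nilpotent_eq_zero: "\<forall>k<m. alg_pow x n k = 0 \<Longrightarrow> \<forall>k<m. x k = 0"
proof (induction n rule: less_induct)
  case (less n)
  show ?case
  proof (cases n)
    case 0
    then show ?thesis using less.prems by simp
  next
    case (Suc n')
    define h where "h = n div 2"
    have "h < n" using Suc unfolding h_def by simp
    \<comment> \<open>x^(2h+2) = (x^(h+1))^2 is a multiple of x^(n+1), hence zero\<close>
    have "\<forall>k<m. alg_pow x (h + h + 1) k = 0"
    proof (cases "h + h + 1 = n")
      case False
      then have "h + h + 1 = n + (h + h - n) + 1" unfolding h_def by auto
      then have "alg_pow x (h + h + 1) = mul (alg_pow x n) (alg_pow x (h + h - n))"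
        by (simp only: alg_pow_add)
      also have "\<dots> = (\<lambda>_. 0)" using less.prems by (intro mul_eq_zero_if_left) auto
      finally show ?thesis by simp
    qed (use less.prems in simp)
    then have "\<forall>k<m. alg_pow x h k = 0" using reduced[of "alg_pow x h"] by (simp add: alg_pow_add)
    then show ?thesis using less.IH[OF \<open>h < n\<close>] by blast
  qed
qed

lemma zero_if_traces_of_powers_zero:
  assumes "\<And>n. alg_tr c m (alg_pow x n) = 0"
  shows "\<forall>k<m. x k = 0"
proof (cases "m = 0")
  case False
  then have m: "Suc (m - 1) = m" by simp
  have "mat_trace (mult_matrix x ^\<^sub>m Suc n) = 0" for n
    using assms by (simp add: mult_matrix_pow mat_trace_mult_matrix del: pow_mat.simps)
  then have "mult_matrix x ^\<^sub>m m = 0\<^sub>m m m"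
    by (rule nilpotent_if_traces_of_powers_zero[OF mult_matrix_carrier])
  then have zero: "mult_matrix (alg_pow x (m - 1)) = 0\<^sub>m m m"
    by (simp only: m mult_matrix_pow[symmetric])
  have entries: "mul (alg_pow x (m - 1)) (basis_vec l) k = 0" if "k < m" "l < m" for k l
  proof -
    have "mult_matrix (alg_pow x (m - 1)) $$ (k, l) = 0" using zero that by simp
    then show ?thesis using that by (simp add: mult_matrix_def)
  qed
  have "alg_pow x (Suc (m - 1)) k = 0" if "k < m" for k
  proof -
    have "alg_pow x (Suc (m - 1)) k = (\<Sum>l<m. mul (alg_pow x (m - 1)) (basis_vec l) k * x l)"
      unfolding alg_pow.simps by (rule mul_expand_right[OF that])
    then show ?thesis using that entries by simp
  qed
  then have "\<forall>k<m. alg_pow x (Suc (m - 1)) k = 0" by blast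
  then show ?thesis by (rule nilpotent_eq_zero)
qed simp

end

locale frobenius_alg = comm_alg +
  fixes f g :: "nat \<Rightarrow> rat"
  assumes frob: "\<And>i j. i < m \<Longrightarrow> j < m \<Longrightarrow>
        counit f m (mul (basis_vec i) (basis_vec j)) = (if i = j then g i else 0)"
    and g_nonzero: "\<And>i. i < m \<Longrightarrow> g i \<noteq> 0"
begin

lemma counit_mul: "counit f m (mul x y) = (\<Sum>i<m. g i * x i * y i)"
proof -
  have "counit f m (mul x y) = (\<Sum>k<m. \<Sum>i<m. \<Sum>j<m. x i * y j * (f k * c i j k))"
    unfolding counit_def by (intro sum.cong refl) (simp add: mul_in sum_distrib_left ac_simps)
  also have "\<dots> = (\<Sum>i<m. \<Sum>j<m. x i * y j * (\<Sum>k<m. f k * c i j k))"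
    by (subst sum.swap, rule sum.cong[OF refl], subst sum.swap) (simp add: sum_distrib_left)
  also have "\<dots> = (\<Sum>i<m. \<Sum>j<m. x i * y j * (if i = j then g i else 0))"
  proof (intro sum.cong refl)
    fix i j
    assume "i \<in> {..<m}" "j \<in> {..<m}"
    then have "counit f m (mul (basis_vec i) (basis_vec j)) = (\<Sum>k<m. f k * c i j k)"
      unfolding counit_def by (intro sum.cong refl) (simp add: mul_basis)
    then show "x i * y j * (\<Sum>k<m. f k * c i j k) = x i * y j * (if i = j then g i else 0)"
      using frob \<open>i \<in> {..<m}\<close> \<open>j \<in> {..<m}\<close> by simp
  qed
  also have "\<dots> = (\<Sum>i<m. g i * x i * y i)"
    by (simp add: ac_simps if_distrib cong: if_cong)
  finally show ?thesis .
qed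

lemma counit_mul_basis: "p < m \<Longrightarrow> counit f m (mul (basis_vec p) z) = g p * z p"
  by (simp add: counit_mul basis_vec_def if_distrib if_distribR cong: if_cong)

text \<open>The Casimir element of the dual bases (e_n) and (e_n / g n) for the Frobenius form.\<close>

definition Omega :: "nat \<Rightarrow> rat" where
  "Omega = (\<lambda>k. \<Sum>n<m. inverse (g n) * mul (basis_vec n) (basis_vec n) k)"

lemma Omega_in: "k < m \<Longrightarrow> Omega k = (\<Sum>n<m. inverse (g n) * c n n k)"
  unfolding Omega_def by (intro sum.cong refl) (simp add: mul_basis)

lemma structure_const_swap:
  assumes i: "i < m" and p: "p < m"
  shows "c i p p = g i * inverse (g p) * c p p i"
proof -
  have "g p * c i p p = counit f m (mul (basis_vec p) (mul (basis_vec i) (basis_vec p)))"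
    using i p by (simp add: counit_mul_basis mul_basis)
  also have "\<dots> = counit f m (mul (basis_vec i) (mul (basis_vec p) (basis_vec p)))"
    by (simp only: mul_assoc[symmetric] mul_comm[of "basis_vec p" "basis_vec i"])
  also have "\<dots> = g i * c p p i"
    using i p by (simp add: counit_mul_basis mul_basis)
  finally show ?thesis using g_nonzero[OF p] by (simp add: field_simps)
qed

lemma alg_tr_eq_counit_mul_Omega: "alg_tr c m a = counit f m (mul a Omega)"
proof -
  have "alg_tr c m a = (\<Sum>p<m. \<Sum>i<m. a i * c i p p)"
    unfolding alg_tr_def by (intro sum.cong refl) (simp add: mul_basis_right)
  also have "\<dots> = (\<Sum>p<m. \<Sum>i<m. g i * a i * (inverse (g p) * c p p i))"
    by (intro sum.cong refl) (simp add: structure_const_swap ac_simps)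
  also have "\<dots> = (\<Sum>i<m. g i * a i * Omega i)"
    by (subst sum.swap) (simp add: Omega_in sum_distrib_left)
  also have "\<dots> = counit f m (mul a Omega)" by (simp add: counit_mul)
  finally show ?thesis .
qed

lemma alg_tr_Omega_gram:
  "alg_tr c m (mul (mul Omega (basis_vec i)) (basis_vec j))
     = (\<Sum>k<m. g k * mul Omega (basis_vec i) k * mul Omega (basis_vec j) k)"
proof -
  have "mul (mul (mul Omega (basis_vec i)) (basis_vec j)) Omega
      = mul (mul Omega (basis_vec i)) (mul Omega (basis_vec j))"
    by (simp only: mul_assoc mul_comm[of "basis_vec j" Omega])
  then show ?thesis by (simp add: alg_tr_eq_counit_mul_Omega counit_mul)
qed

lemma signature_counit_form:
  "real_of_int (signature (\<lambda>i j. real_of_rat (counit f m (mul (basis_vec i) (basis_vec j)))) m)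
     = (\<Sum>i<m. sgn (real_of_rat (g i)))"
  by (rule signature_diag) (simp add: frob)

end

locale semisimple_frobenius_alg = reduced_comm_alg + frobenius_alg
begin

lemma mul_Omega_injective:
  assumes "\<forall>k<m. mul Omega x k = 0"
  shows "\<forall>k<m. x k = 0"
proof (rule zero_if_traces_of_powers_zero)
  fix n
  have x_Omega: "mul x Omega = (\<lambda>_. 0)"
  proof
    fix k
    show "mul x Omega k = 0" using assms by (cases "k < m") (simp_all add: mul_comm mul_out)
  qed
  have "mul (alg_pow x n) Omega = (\<lambda>_. 0)"
  proof (cases n)
    case (Suc n')
    then show ?thesis by (simp add: mul_assoc x_Omega mul_eq_zero_if_right)
  qed (simp add: x_Omega)
  then show "alg_tr c m (alg_pow x n) = 0"
    by (simp add: alg_tr_eq_counit_mul_Omega counit_def)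
qed

lemma signature_trace_form:
  "signature (\<lambda>i j. real_of_rat (alg_tr c m (mul (mul Omega (basis_vec i)) (basis_vec j)))) m
     = signature (\<lambda>i j. real_of_rat (counit f m (mul (basis_vec i) (basis_vec j)))) m"
proof -
  define M where "M k i = mul Omega (basis_vec i) k" for k i
  have "\<forall>l<m. x l = 0" if H: "\<forall>k<m. (\<Sum>l<m. M k l * x l) = 0" for x
  proof (rule mul_Omega_injective, intro allI impI)
    fix k
    assume "k < m"
    then show "mul Omega x k = 0" using H by (subst mul_expand_right) (auto simp: M_def)
  qed
  then have "\<exists>N. \<forall>k<m. \<forall>j<m. (\<Sum>l<m. M k l * N l j) = (if k = j then 1 else 0)"
    by (rule injective_square_matrix_right_inverse)
  then obtain N where N: "\<forall>k<m. \<forall>j<m. (\<Sum>l<m. M k l * N l j) = (if k = j then 1 else 0)"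
    by blast
  show ?thesis
  proof (rule signature_congruent[where M = "\<lambda>k i. real_of_rat (M k i)"
        and N = "\<lambda>l j. real_of_rat (N l j)"])
    fix i j
    let ?G = "\<lambda>k l. real_of_rat (counit f m (mul (basis_vec k) (basis_vec l)))"
    have "(\<Sum>l<m. real_of_rat (M k i) * ?G k l * real_of_rat (M l j))
        = real_of_rat (g k * M k i * M k j)" if "k < m" for k
    proof -
      have "(\<Sum>l<m. real_of_rat (M k i) * ?G k l * real_of_rat (M l j))
          = (\<Sum>l<m. if l = k then real_of_rat (g k * M k i * M k j) else 0)"
        using that by (intro sum.cong refl) (auto simp: frob of_rat_mult)
      then show ?thesis using that by simp
    qed
    then show "real_of_rat (alg_tr c m (mul (mul Omega (basis_vec i)) (basis_vec j)))
        = (\<Sum>k<m. \<Sum>l<m. real_of_rat (M k i) * ?G k l * real_of_rat (M l j))"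
      by (simp add: alg_tr_Omega_gram of_rat_sum M_def)
  next
    fix k j
    assume "k < m" "j < m"
    then show "(\<Sum>l<m. real_of_rat (M k l) * real_of_rat (N l j)) = (if k = j then 1 else 0)"
      using N by (simp flip: of_rat_mult of_rat_sum)
  qed
qed

end

section \<open>The signs of the quantum integers\<close>

lemma qsign_cases: "qsign r s n = 1 \<or> qsign r s n = -1"
  by (simp add: qsign_def minus_one_power_iff)

lemma sgn_qsign: "sgn (real_of_int (qsign r s n)) = real_of_int (qsign r s n)"
  using qsign_cases[of r s n] by auto

lemma qsign_reflect:
  assumes n: "0 < n" "n < r" and cop: "coprime r s" and odd_s: "odd s"
  shows "qsign r s (r - n) = qsign r s n"
proof -
  define q where "q = n * s div r"
  define \<rho> where "\<rho> = n * s mod r"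
  have ns: "n * s = r * q + \<rho>" and \<rho>r: "\<rho> < r"
    using n unfolding q_def \<rho>_def by simp_all
  have "\<rho> \<noteq> 0"
  proof
    assume "\<rho> = 0"
    then have "r dvd n * s" unfolding \<rho>_def by auto
    then have "r dvd n" using cop by (simp add: coprime_dvd_mult_left_iff)
    then show False using n by (auto dest: dvd_imp_le)
  qed
  have "r * q \<le> n * s" using ns by simp
  also have "n * s < r * s" using n odd_s by (simp add: odd_pos)
  finally have qs: "q < s" by simp
  \<comment> \<open>as r does not divide n s, the quotient of (r - n) s by r is s - 1 - q\<close>
  have "(r - n) * s = r * (s - q - 1) + (r - \<rho>)"
  proof -
    define t where "t = s - q - 1"
    have "s = t + q + 1" using qs unfolding t_def by simp
    then have "r * s = r * t + r * q + r" by (simp add: algebra_simps)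
    moreover have "(r - n) * s = r * s - (r * q + \<rho>)" by (simp add: diff_mult_distrib ns)
    ultimately show ?thesis using \<rho>r unfolding t_def[symmetric] by simp
  qed
  then have "(r - n) * s div r = s - q - 1"
    using \<open>\<rho> \<noteq> 0\<close> \<rho>r by (intro div_nat_eqI) simp_all
  moreover have "even (s - q - 1) \<longleftrightarrow> even q"
  proof -
    have "s - q - 1 + q = s - 1" using qs by simp
    moreover have "even (s - 1)" using odd_s by simp
    ultimately show ?thesis by (metis even_add)
  qed
  ultimately show ?thesis unfolding qsign_def q_def[symmetric] by (simp add: minus_one_power_iff)
qed

lemma sum_pairs: "(\<Sum>n=1..2*k. h n) = (\<Sum>i<k. h (2*i+1) + h (2*i+2))"
  for h :: "nat \<Rightarrow> 'a::comm_monoid_add"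
proof (induction k)
  case (Suc k)
  have "(\<Sum>n=1..2 * Suc k. h n) = (\<Sum>n=1..2*k. h n) + h (2*k+1) + h (2*k+2)"
    by (simp add: sum.cl_ivl_Suc add.assoc)
  then show ?case using Suc by (simp add: add.assoc)
qed simp

lemma sum_qsign_eq_twice_odd_part:
  assumes r: "r = 2 * m + 1" and cop: "coprime r s" and odd_s: "odd s"
  shows "(\<Sum>n=1..r-1. qsign r s n) = 2 * (\<Sum>i<m. qsign r s (2*i+1))"
proof -
  have even: "qsign r s (2*i+2) = qsign r s (2*(m - Suc i) + 1)" if "i < m" for i
  proof -
    have "2*(m - Suc i) + 1 = r - (2*i+2)" using that r by simp
    then show ?thesis using qsign_reflect[of "2*i+2" r s] that r cop odd_s by simp
  qed
  have "(\<Sum>n=1..r-1. qsign r s n) = (\<Sum>i<m. qsign r s (2*i+1) + qsign r s (2*i+2))"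
    using sum_pairs[of "qsign r s" m] r by simp
  also have "\<dots> = (\<Sum>i<m. qsign r s (2*i+1)) + (\<Sum>i<m. qsign r s (2*(m - Suc i) + 1))"
    using even by (simp add: sum.distrib)
  also have "(\<Sum>i<m. qsign r s (2*(m - Suc i) + 1)) = (\<Sum>i<m. qsign r s (2*i+1))"
    by (rule sum.nat_diff_reindex)
  finally show ?thesis by simp
qed

theorem mainTheorem14:
  fixes r s :: nat
    and c :: "nat \<Rightarrow> nat \<Rightarrow> nat \<Rightarrow> rat"
    and f :: "nat \<Rightarrow> rat"
  defines "m \<equiv> (r - 1) div 2"
  assumes r3: "r \<ge> 3" and odd_r: "odd r" and odd_s: "odd s" and cop: "coprime r s"
    and s_pos: "0 < s" and s_lt: "s < r"
    and comm: "\<And>i j k. i < m \<Longrightarrow> j < m \<Longrightarrow> k < m \<Longrightarrow> c i j k = c j i k"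
    and assoc: "\<And>i j k p. i < m \<Longrightarrow> j < m \<Longrightarrow> k < m \<Longrightarrow> p < m \<Longrightarrow>
        (\<Sum>l<m. c i j l * c l k p) = (\<Sum>l<m. c j k l * c i l p)"
    and semisimple: "\<And>x. (\<forall>k<m. alg_mult c m x x k = 0) \<Longrightarrow> (\<forall>k<m. x k = 0)"
    and frob: "\<And>i j. i < m \<Longrightarrow> j < m \<Longrightarrow>
        counit f m (alg_mult c m (basis_vec i) (basis_vec j))
          = (if i = j then of_int (qsign r s (2*i+1)) else 0)"
  shows "real_of_int (signature (\<lambda>i j. real_of_rat
             (counit f m (alg_mult c m (basis_vec i) (basis_vec j)))) m)
           = (\<Sum>n=1..r-1. real_of_int (qsign r s n)) / 2
       \<and> signature (\<lambda>i j. real_of_rat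
             (counit f m (alg_mult c m (basis_vec i) (basis_vec j)))) m
         = signature (\<lambda>i j. real_of_rat
             (alg_tr c m (alg_mult c m (alg_mult c m (Omega_plus r s c m) (basis_vec i))
                (basis_vec j)))) m"
proof -
  define g :: "nat \<Rightarrow> rat" where "g i = of_int (qsign r s (2*i+1))" for i
  have g_cases: "g i = 1 \<or> g i = -1" for i
    using qsign_cases[of r s "2*i+1"] by (auto simp: g_def)
  interpret semisimple_frobenius_alg c m f g
  proof unfold_locales
    show "counit f m (alg_mult c m (basis_vec i) (basis_vec j)) = (if i = j then g i else 0)"
      if "i < m" "j < m" for i j
      unfolding g_def using that by (rule frob)
    show "g i \<noteq> 0" for i
      using g_cases[of i] by auto
  qed (fact comm assoc semisimple)+
  have "Omega_plus r s c m = Omega"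
    unfolding Omega_plus_def Omega_def g_def[symmetric]
    using g_cases by (intro ext sum.cong refl) (metis inverse_1 inverse_minus_eq)
  moreover have "real_of_int (signature (\<lambda>i j. real_of_rat
      (counit f m (mul (basis_vec i) (basis_vec j)))) m) = (\<Sum>i<m. real_of_int (qsign r s (2*i+1)))"
    using signature_counit_form by (simp add: g_def sgn_qsign)
  moreover have "r = 2 * m + 1"
    unfolding m_def using odd_r r3 by (auto elim!: oddE)
  then have "(\<Sum>n=1..r-1. real_of_int (qsign r s n)) = 2 * (\<Sum>i<m. real_of_int (qsign r s (2*i+1)))"
    using sum_qsign_eq_twice_odd_part cop odd_s by (simp flip: of_int_sum)
  ultimately show ?thesis using signature_trace_form by simp
qed

end
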